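(* Let $\mathcal{O}_K$ be a Henselian discrete valuation domain with field of fractions $K$ and algebraically closed residue field of characteristic $2$, with normalized valuation $v$. Let $u$ be an integer with $0<u<v(2)$. Then there exists an elliptic curve $E/K$ with good supersingular reduction such that $v(j(E))=12u$.
   Context: $v(0)=\infty$, so $v(2)=\infty$ when $\operatorname{char}K=2$. *)

theory Defs
  imports "HOL-Library.Extended_Real" "HOL-Computational_Algebra.Polynomial"
begin

text \<open>A normalized discrete valuation on a field K, with values in Z \<union> {\<infinity>}
  (v 0 = \<infinity>); the valuation ring O_K is {x. v x \<ge> 0}, its maximal ideal {x. v x > 0}.\<close>

definition discrete_valuation :: "('a::field \<Rightarrow> ereal) \<Rightarrow> bool" where
  "discrete_valuation v \<longleftrightarrow>
     (\<forall>x. v x = \<infinity> \<longleftrightarrow> x = 0) \<and>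
     (\<forall>x. x \<noteq> 0 \<longrightarrow> (\<exists>n::int. v x = ereal (of_int n))) \<and>
     (\<forall>x y. v (x * y) = v x + v y) \<and>
     (\<forall>x y. min (v x) (v y) \<le> v (x + y)) \<and>
     (\<exists>\<pi>. v \<pi> = 1)"

definition integral_poly :: "('a::field \<Rightarrow> ereal) \<Rightarrow> 'a poly \<Rightarrow> bool" where
  "integral_poly v p \<longleftrightarrow> (\<forall>i. v (coeff p i) \<ge> 0)"

definition henselian :: "('a::field \<Rightarrow> ereal) \<Rightarrow> bool" where
  "henselian v \<longleftrightarrow>
     (\<forall>p a. integral_poly v p \<and> lead_coeff p = 1 \<and> v a \<ge> 0 \<and>
        v (poly p a) > 0 \<and> v (poly (pderiv p) a) = 0 \<longrightarrow>
        (\<exists>b. poly p b = 0 \<and> v (b - a) > 0))"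

text \<open>The residue field O_K/m is algebraically closed: every monic polynomial of positive
  degree over O_K has a root modulo m (its reduction is monic of the same degree).\<close>
definition residue_field_alg_closed :: "('a::field \<Rightarrow> ereal) \<Rightarrow> bool" where
  "residue_field_alg_closed v \<longleftrightarrow>
     (\<forall>p. integral_poly v p \<and> lead_coeff p = 1 \<and> degree p \<ge> 1 \<longrightarrow>
        (\<exists>a. v a \<ge> 0 \<and> v (poly p a) > 0))"

record 'a weierstrass =
  wa1 :: 'a
  wa2 :: 'a
  wa3 :: 'a
  wa4 :: 'a
  wa6 :: 'a

definition w_b2 :: "'a::field weierstrass \<Rightarrow> 'a" where
  "w_b2 E = wa1 E ^ 2 + 4 * wa2 E"
definition w_b4 :: "'a::field weierstrass \<Rightarrow> 'a" where
  "w_b4 E = 2 * wa4 E + wa1 E * wa3 E"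
definition w_b6 :: "'a::field weierstrass \<Rightarrow> 'a" where
  "w_b6 E = wa3 E ^ 2 + 4 * wa6 E"
definition w_b8 :: "'a::field weierstrass \<Rightarrow> 'a" where
  "w_b8 E = wa1 E ^ 2 * wa6 E + 4 * wa2 E * wa6 E - wa1 E * wa3 E * wa4 E
            + wa2 E * wa3 E ^ 2 - wa4 E ^ 2"
definition w_c4 :: "'a::field weierstrass \<Rightarrow> 'a" where
  "w_c4 E = w_b2 E ^ 2 - 24 * w_b4 E"
definition w_disc :: "'a::field weierstrass \<Rightarrow> 'a" where
  "w_disc E = - (w_b2 E ^ 2 * w_b8 E) - 8 * w_b4 E ^ 3 - 27 * w_b6 E ^ 2
              + 9 * w_b2 E * w_b4 E * w_b6 E"
definition j_inv :: "'a::field weierstrass \<Rightarrow> 'a" where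
  "j_inv E = w_c4 E ^ 3 / w_disc E"

definition elliptic :: "'a::field weierstrass \<Rightarrow> bool" where
  "elliptic E \<longleftrightarrow> w_disc E \<noteq> 0"

text \<open>Change of variables x = u^2 x' + r, y = u^3 y' + s u^2 x' + t (Silverman, Table 3.1).\<close>
definition w_transform :: "'a::field weierstrass \<Rightarrow> 'a \<Rightarrow> 'a \<Rightarrow> 'a \<Rightarrow> 'a \<Rightarrow> 'a weierstrass" where
  "w_transform E u r s t =
    \<lparr> wa1 = (wa1 E + 2 * s) / u,
      wa2 = (wa2 E - s * wa1 E + 3 * r - s ^ 2) / u ^ 2,
      wa3 = (wa3 E + r * wa1 E + 2 * t) / u ^ 3,
      wa4 = (wa4 E - s * wa3 E + 2 * r * wa2 E - (t + r * s) * wa1 E + 3 * r ^ 2 - 2 * s * t) / u ^ 4,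
      wa6 = (wa6 E + r * wa4 E + r ^ 2 * wa2 E + r ^ 3 - t * wa3 E - t ^ 2 - r * t * wa1 E) / u ^ 6 \<rparr>"

definition w_isomorphic :: "'a::field weierstrass \<Rightarrow> 'a weierstrass \<Rightarrow> bool" where
  "w_isomorphic E E' \<longleftrightarrow> (\<exists>u r s t. u \<noteq> 0 \<and> E' = w_transform E u r s t)"

definition w_eqn :: "'a::field weierstrass \<Rightarrow> 'a \<Rightarrow> 'a \<Rightarrow> 'a" where
  "w_eqn E x y = y ^ 2 + wa1 E * x * y + wa3 E * y
                 - (x ^ 3 + wa2 E * x ^ 2 + wa4 E * x + wa6 E)"

definition good_reduction_model :: "('a::field \<Rightarrow> ereal) \<Rightarrow> 'a weierstrass \<Rightarrow> bool" where
  "good_reduction_model v E \<longleftrightarrow>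
     v (wa1 E) \<ge> 0 \<and> v (wa2 E) \<ge> 0 \<and> v (wa3 E) \<ge> 0 \<and> v (wa4 E) \<ge> 0 \<and> v (wa6 E) \<ge> 0 \<and>
     v (w_disc E) = 0"

text \<open>For a residue field k of characteristic 2 which is algebraically closed, the reduced
  curve is supersingular iff its 2-torsion over k (= its algebraic closure) is trivial, i.e.
  there is no affine point (x,y) of the reduction with P = -P, i.e. with 2y + a1 x + a3 = 0
  in k. Points of k are represented by elements of O_K modulo the maximal ideal.\<close>
definition reduction_2torsion_trivial :: "('a::field \<Rightarrow> ereal) \<Rightarrow> 'a weierstrass \<Rightarrow> bool" where
  "reduction_2torsion_trivial v E \<longleftrightarrow>
     \<not> (\<exists>x y. v x \<ge> 0 \<and> v y \<ge> 0 \<and> v (w_eqn E x y) > 0 \<and>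
              v (2 * y + wa1 E * x + wa3 E) > 0)"

definition good_supersingular_reduction :: "('a::field \<Rightarrow> ereal) \<Rightarrow> 'a weierstrass \<Rightarrow> bool" where
  "good_supersingular_reduction v E \<longleftrightarrow>
     (\<exists>E'. w_isomorphic E E' \<and> good_reduction_model v E' \<and> reduction_2torsion_trivial v E')"

end

theory Submission
  imports Defs
begin

text \<open>The curve y^2 + a x y + y = x^3 with v(a) = u does the job. Its discriminant a^3 - 27
  is a unit because 27 is odd and v(a) > 0, so the equation itself is a good model; as 2 and a
  vanish modulo the maximal ideal, 2y + a x + 1 reduces to 1, so the reduction has no
  2-torsion and is supersingular. Since c4 = a (a^3 - 24) and v(24) = 3 v(2) > 3u = v(a^3),
  v(c4) = 4u and v(j) = 3 v(c4) = 12u.\<close>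

lemma valuation_mult:
  "discrete_valuation v \<Longrightarrow> v (x * y) = v x + v y"
  unfolding discrete_valuation_def by blast

lemma valuation_add_ge_min:
  "discrete_valuation v \<Longrightarrow> min (v x) (v y) \<le> v (x + y)"
  unfolding discrete_valuation_def by blast

lemma valuation_eq_infinity_iff:
  "discrete_valuation v \<Longrightarrow> v x = \<infinity> \<longleftrightarrow> x = 0"
  unfolding discrete_valuation_def by blast

lemma valuation_finite:
  "discrete_valuation v \<Longrightarrow> x \<noteq> 0 \<Longrightarrow> \<exists>n::int. v x = ereal (of_int n)"
  unfolding discrete_valuation_def by blast

lemma valuation_one:
  assumes "discrete_valuation v"
  shows "v 1 = 0"
proof -
  obtain n :: int where n: "v 1 = ereal n"
    using valuation_finite[OF assms, of 1] by auto
  have "v (1 * 1) = v 1 + v 1"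
    using valuation_mult[OF assms] .
  with n show ?thesis
    by (simp add: zero_ereal_def)
qed

lemma valuation_uminus:
  assumes "discrete_valuation v"
  shows "v (- x) = v x"
proof -
  obtain n :: int where n: "v (- 1) = ereal n"
    using valuation_finite[OF assms, of "- 1"] by auto
  have "v ((- 1) * (- 1)) = v (- 1) + v (- 1)"
    using valuation_mult[OF assms] .
  with n valuation_one[OF assms] have "v (- 1) = 0"
    by (simp add: zero_ereal_def)
  then show ?thesis
    using valuation_mult[OF assms, of "- 1" x] by simp
qed

lemma valuation_add_eq_if_less:
  assumes "discrete_valuation v" and "v x < v y"
  shows "v (x + y) = v x"
proof -
  have "v x \<le> v (x + y)"
    using valuation_add_ge_min[OF assms(1), of x y] assms(2) by simp
  moreover have "min (v (x + y)) (v (- y)) \<le> v ((x + y) + (- y))"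
    using valuation_add_ge_min[OF assms(1)] .
  ultimately show ?thesis
    using assms(2) valuation_uminus[OF assms(1), of y] by (auto simp: min_def split: if_splits)
qed

lemma valuation_of_nat_nonneg:
  assumes "discrete_valuation v"
  shows "v (of_nat n) \<ge> 0"
proof (induction n)
  case 0
  then show ?case
    using valuation_eq_infinity_iff[OF assms, of 0] by simp
next
  case (Suc n)
  have "min (v 1) (v (of_nat n)) \<le> v (1 + of_nat n)"
    using valuation_add_ge_min[OF assms] .
  with Suc valuation_one[OF assms] show ?case
    by simp
qed

lemma valuation_power:
  assumes "discrete_valuation v"
  shows "v (x ^ n) = ereal (real n) * v x"
proof (induction n)
  case 0
  then show ?case
    using valuation_one[OF assms] by simp
next
  case (Suc n)
  have "v (x ^ Suc n) = v x + ereal (real n) * v x"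
    using valuation_mult[OF assms, of x "x ^ n"] Suc by simp
  also have "\<dots> = (ereal 1 + ereal (real n)) * v x"
    using ereal_left_distrib[of "ereal 1" "ereal (real n)" "v x"] by simp
  finally show ?case
    by (simp add: add.commute)
qed

lemma valuation_inverse:
  assumes "discrete_valuation v" and "x \<noteq> 0"
  shows "v (inverse x) = - v x"
proof -
  obtain n :: int where n: "v x = ereal n"
    using valuation_finite[OF assms] by auto
  have "v x + v (inverse x) = 0"
    using valuation_mult[OF assms(1), of x "inverse x"] assms(2) valuation_one[OF assms(1)] by simp
  with n show ?thesis
    by (cases "v (inverse x)") (auto simp: zero_ereal_def)
qed

lemma ex_valuation_eq_of_int:
  assumes "discrete_valuation v"
  shows "\<exists>x. v x = ereal (of_int n)"
proof -
  obtain \<pi> where \<pi>: "v \<pi> = 1"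
    using assms unfolding discrete_valuation_def by blast
  have "\<pi> \<noteq> 0"
    using \<pi> valuation_eq_infinity_iff[OF assms, of \<pi>] by (auto simp: one_ereal_def)
  show ?thesis
  proof (cases "n \<ge> 0")
    case True
    then have "v (\<pi> ^ nat n) = ereal (of_int n)"
      using valuation_power[OF assms] \<pi> by simp
    then show ?thesis ..
  next
    case False
    then have "v (inverse \<pi> ^ nat (- n)) = ereal (of_int n)"
      using valuation_power[OF assms] valuation_inverse[OF assms \<open>\<pi> \<noteq> 0\<close>] \<pi> by simp
    then show ?thesis ..
  qed
qed

lemma valuation_odd_eq_0:
  assumes "discrete_valuation v" and "v 2 > 0" and "odd n"
  shows "v (of_nat n) = 0"
proof -
  have "v (2 * of_nat (n div 2)) > 0"
    using valuation_mult[OF assms(1)] valuation_of_nat_nonneg[OF assms(1), of "n div 2"] assms(2)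
    by (metis add_pos_nonneg)
  then have "v (1 + 2 * of_nat (n div 2)) = v 1"
    using valuation_add_eq_if_less[OF assms(1)] valuation_one[OF assms(1)] by simp
  moreover have "(1 + 2 * of_nat (n div 2) :: 'a) = of_nat n"
    using assms(3) by (metis of_nat_1 of_nat_add of_nat_mult of_nat_numeral odd_two_times_div_two_succ add.commute)
  ultimately show ?thesis
    using valuation_one[OF assms(1)] by simp
qed

lemma w_isomorphic_refl: "w_isomorphic E E"
  unfolding w_isomorphic_def
  by (rule exI[of _ 1], rule exI[of _ 0], rule exI[of _ 0], rule exI[of _ 0]) (simp add: w_transform_def)

lemma good_supersingular_reductionI:
  "good_reduction_model v E \<Longrightarrow> reduction_2torsion_trivial v E \<Longrightarrow> good_supersingular_reduction v E"
  unfolding good_supersingular_reduction_def using w_isomorphic_refl by blast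

definition a1_curve :: "'a::field \<Rightarrow> 'a weierstrass" where
  "a1_curve a = \<lparr>wa1 = a, wa2 = 0, wa3 = 1, wa4 = 0, wa6 = 0\<rparr>"

lemma w_disc_a1_curve: "w_disc (a1_curve a) = a ^ 3 - 27"
  unfolding a1_curve_def w_disc_def w_b2_def w_b4_def w_b6_def w_b8_def
  by (simp add: algebra_simps power3_eq_cube power2_eq_square)

lemma w_c4_a1_curve: "w_c4 (a1_curve a) = a * (a ^ 3 - 24)"
  unfolding a1_curve_def w_c4_def w_b2_def w_b4_def
  by (simp add: algebra_simps power3_eq_cube power2_eq_square)

lemma valuation_w_disc_a1_curve:
  assumes "discrete_valuation v" and "v 2 > 0" and "v a > 0"
  shows "v (w_disc (a1_curve a)) = 0"
proof -
  have "v (- of_nat 27 :: 'a) = 0"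
    using valuation_odd_eq_0[OF assms(1,2), of 27] valuation_uminus[OF assms(1)] by simp
  moreover have "v (a ^ 3) > 0"
    using valuation_power[OF assms(1), of a 3] assms(3) by (simp add: ereal_zero_less_0_iff)
  ultimately have "v (- of_nat 27 + a ^ 3) = 0"
    using valuation_add_eq_if_less[OF assms(1)] by (metis)
  then show ?thesis
    by (simp add: w_disc_a1_curve)
qed

lemma elliptic_a1_curve:
  assumes "discrete_valuation v" and "v 2 > 0" and "v a > 0"
  shows "elliptic (a1_curve a)"
  using valuation_w_disc_a1_curve[OF assms] valuation_eq_infinity_iff[OF assms(1), of "w_disc (a1_curve a)"]
  by (auto simp: elliptic_def)

lemma good_supersingular_reduction_a1_curve:
  assumes "discrete_valuation v" and "v 2 > 0" and "v a > 0"
  shows "good_supersingular_reduction v (a1_curve a)"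
proof (rule good_supersingular_reductionI)
  show "good_reduction_model v (a1_curve a)"
    unfolding good_reduction_model_def
    using assms(3) valuation_w_disc_a1_curve[OF assms] valuation_one[OF assms(1)]
      valuation_eq_infinity_iff[OF assms(1), of 0]
    by (simp add: a1_curve_def)
  show "reduction_2torsion_trivial v (a1_curve a)"
    unfolding reduction_2torsion_trivial_def
  proof clarify
    fix x y
    assume "0 \<le> v x" "0 \<le> v y"
      and vanishes: "0 < v (2 * y + wa1 (a1_curve a) * x + wa3 (a1_curve a))"
    have "v (2 * y) > 0" "v (a * x) > 0"
      using valuation_mult[OF assms(1)] assms(2,3) \<open>0 \<le> v x\<close> \<open>0 \<le> v y\<close>
      by (metis add_pos_nonneg)+
    then have "v (2 * y + a * x) > 0"
      using valuation_add_ge_min[OF assms(1), of "2 * y" "a * x"] by (meson less_le_trans min_less_iff_conj)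
    then have "v (1 + (2 * y + a * x)) = 0"
      using valuation_add_eq_if_less[OF assms(1), of 1] valuation_one[OF assms(1)] by simp
    with vanishes show False
      by (simp add: a1_curve_def algebra_simps)
  qed
qed

lemma valuation_j_inv_a1_curve:
  assumes "discrete_valuation v" and "0 < v a" and "v a < v 2"
  shows "v (j_inv (a1_curve a)) = 12 * v a"
proof -
  have "v 2 > 0"
    using assms(2,3) by (rule less_trans)
  obtain r where r: "v a = ereal r"
    using assms(2,3) by (cases "v a") auto
  have "v (3::'a) = 0"
    using valuation_odd_eq_0[OF assms(1) \<open>v 2 > 0\<close>, of 3] by simp
  have "v (- 24) = v (2 ^ 3 * 3)"
    using valuation_uminus[OF assms(1), of 24] by simp
  also have "\<dots> = v (2 ^ 3) + v 3"
    by (rule valuation_mult[OF assms(1)])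
  also have "\<dots> = ereal 3 * v 2"
    using valuation_power[OF assms(1), of 2 3] \<open>v 3 = 0\<close> by simp
  finally have "v (- 24) = ereal 3 * v 2" .
  moreover have "v (a ^ 3) = ereal (3 * r)"
    using valuation_power[OF assms(1), of a 3] r by simp
  ultimately have "v (a ^ 3) < v (- 24)"
    using assms(3) r by (cases "v 2") auto
  then have "v (a ^ 3 - 24) = ereal (3 * r)"
    using valuation_add_eq_if_less[OF assms(1), of "a ^ 3" "- 24"] \<open>v (a ^ 3) = ereal (3 * r)\<close>
    by simp
  then have "v (w_c4 (a1_curve a)) = ereal (4 * r)"
    using valuation_mult[OF assms(1), of a "a ^ 3 - 24"] r by (simp add: w_c4_a1_curve)
  then have "v (w_c4 (a1_curve a) ^ 3) = ereal (12 * r)"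
    using valuation_power[OF assms(1), of "w_c4 (a1_curve a)" 3] by simp
  moreover have "w_c4 (a1_curve a) ^ 3 = j_inv (a1_curve a) * w_disc (a1_curve a)"
    using elliptic_a1_curve[OF assms(1) \<open>v 2 > 0\<close> assms(2)] by (simp add: j_inv_def elliptic_def)
  ultimately show ?thesis
    using valuation_mult[OF assms(1)] valuation_w_disc_a1_curve[OF assms(1) \<open>v 2 > 0\<close> assms(2)] r
    by simp
qed

theorem lemma2p12:
  fixes v :: "'K::field \<Rightarrow> ereal" and u :: int
  assumes "discrete_valuation v"
    and "henselian v"
    and "residue_field_alg_closed v"
    and "v 2 > 0"
    and "0 < u"
    and "ereal (of_int u) < v 2"
  shows "\<exists>E :: 'K weierstrass. elliptic E \<and> good_supersingular_reduction v E \<and>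
           v (j_inv E) = ereal (of_int (12 * u))"
proof -
  obtain a :: 'K where a: "v a = ereal (of_int u)"
    using ex_valuation_eq_of_int[OF assms(1)] by blast
  then have "0 < v a" "v a < v 2"
    using assms(5,6) by simp_all
  have "elliptic (a1_curve a)"
    using elliptic_a1_curve[OF assms(1,4) \<open>0 < v a\<close>] .
  moreover have "good_supersingular_reduction v (a1_curve a)"
    using good_supersingular_reduction_a1_curve[OF assms(1,4) \<open>0 < v a\<close>] .
  moreover have "v (j_inv (a1_curve a)) = ereal (of_int (12 * u))"
    using valuation_j_inv_a1_curve[OF assms(1) \<open>0 < v a\<close> \<open>v a < v 2\<close>] a by simp
  ultimately show ?thesis
    by blast
qed

end
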